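(* Let $G=(V,E)$ be a network as in the context, $\omega\ge1$ an integer, and $t$ a sink node with $C_t\ge\omega$; let $\delta_t=C_t-\omega$. Then $$|\mathcal{A}_t(\delta_t)|\ge\binom{|\mathrm{In}(t)|}{\delta_t}.$$
   Context: Network: $G=(V,E)$ is a finite directed acyclic graph (parallel edges allowed) with a single source node $s$ and a set of sink nodes $T\subseteq V\setminus\{s\}$; $s$ has no incoming edges and sink nodes have no outgoing edges; $\mathrm{In}(t)$ is the set of incoming edges of $t$. A directed path is a sequence of edges $(e_1,\dots,e_m)$, $m\ge1$, with tail of $e_{k+1}$ equal to head of $e_k$. A cut separating node $v$ from node $u$ is a set of edges whose removal leaves no directed path from $u$ to $v$; $C_t$ is the minimum size of a cut separating sink $t$ from $s$. For $\xi\subseteq E$ and a node $u$, $A\subseteq E$ is a cut separating $u$ from $\xi$ if every directed path in $G$ whose first edge lies in $\xi$ and whose last edge has head $u$ contains an edge of $A$; $\mathrm{mincut}(\xi,u)$ is the minimum size of such a cut. A minimum cut separating $u$ from $\xi$ is primary if it separates $u$ from every minimum cut separating $u$ from $\xi$; it exists and is unique. $\xi$ is primary for $u$ if $\xi$ is the primary minimum cut separating $u$ from $\xi$. $\mathcal{A}_t(r)=\{\xi\subseteq E:|\xi|=r,\ \xi\text{ primary for }t\}$. *)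

theory Defs
  imports "Graph_Theory.Digraph"
begin

definition dpath :: "('v,'e) pre_digraph \<Rightarrow> 'e list \<Rightarrow> bool" where
  "dpath G p \<longleftrightarrow> p \<noteq> [] \<and> set p \<subseteq> arcs G \<and>
     (\<forall>k. Suc k < length p \<longrightarrow> tail G (p ! Suc k) = head G (p ! k))"

definition dacyclic :: "('v,'e) pre_digraph \<Rightarrow> bool" where
  "dacyclic G \<longleftrightarrow> (\<forall>p. dpath G p \<longrightarrow> head G (last p) \<noteq> tail G (hd p))"

definition in_arcs_of :: "('v,'e) pre_digraph \<Rightarrow> 'v \<Rightarrow> 'e set" where
  "in_arcs_of G v = {e \<in> arcs G. head G e = v}"

definition out_arcs_of :: "('v,'e) pre_digraph \<Rightarrow> 'v \<Rightarrow> 'e set" where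
  "out_arcs_of G v = {e \<in> arcs G. tail G e = v}"

definition network :: "('v,'e) pre_digraph \<Rightarrow> 'v \<Rightarrow> 'v set \<Rightarrow> bool" where
  "network G s T \<longleftrightarrow> fin_digraph G \<and> dacyclic G \<and> s \<in> verts G \<and>
     in_arcs_of G s = {} \<and> T \<subseteq> verts G - {s} \<and> (\<forall>t\<in>T. out_arcs_of G t = {})"

definition node_cut :: "('v,'e) pre_digraph \<Rightarrow> 'v \<Rightarrow> 'v \<Rightarrow> 'e set \<Rightarrow> bool" where
  "node_cut G u v A \<longleftrightarrow> A \<subseteq> arcs G \<and>
     (\<forall>p. dpath G p \<and> tail G (hd p) = u \<and> head G (last p) = v \<longrightarrow> set p \<inter> A \<noteq> {})"

definition Cmin :: "('v,'e) pre_digraph \<Rightarrow> 'v \<Rightarrow> 'v \<Rightarrow> nat" where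
  "Cmin G s t = Min {card A | A. node_cut G s t A}"

definition edge_cut :: "('v,'e) pre_digraph \<Rightarrow> 'e set \<Rightarrow> 'v \<Rightarrow> 'e set \<Rightarrow> bool" where
  "edge_cut G \<xi> u A \<longleftrightarrow> A \<subseteq> arcs G \<and>
     (\<forall>p. dpath G p \<and> hd p \<in> \<xi> \<and> head G (last p) = u \<longrightarrow> set p \<inter> A \<noteq> {})"

definition mincut :: "('v,'e) pre_digraph \<Rightarrow> 'e set \<Rightarrow> 'v \<Rightarrow> nat" where
  "mincut G \<xi> u = Min {card A | A. edge_cut G \<xi> u A}"

definition min_edge_cut :: "('v,'e) pre_digraph \<Rightarrow> 'e set \<Rightarrow> 'v \<Rightarrow> 'e set \<Rightarrow> bool" where
  "min_edge_cut G \<xi> u A \<longleftrightarrow> edge_cut G \<xi> u A \<and> card A = mincut G \<xi> u"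

definition primary_cut :: "('v,'e) pre_digraph \<Rightarrow> 'e set \<Rightarrow> 'v \<Rightarrow> 'e set \<Rightarrow> bool" where
  "primary_cut G \<xi> u A \<longleftrightarrow> min_edge_cut G \<xi> u A \<and>
     (\<forall>B. min_edge_cut G \<xi> u B \<longrightarrow> edge_cut G B u A)"

definition primary_for :: "('v,'e) pre_digraph \<Rightarrow> 'e set \<Rightarrow> 'v \<Rightarrow> bool" where
  "primary_for G \<xi> u \<longleftrightarrow> \<xi> \<subseteq> arcs G \<and> primary_cut G \<xi> u \<xi>"

definition primary_sets :: "('v,'e) pre_digraph \<Rightarrow> 'v \<Rightarrow> nat \<Rightarrow> 'e set set" where
  "primary_sets G t r = {\<xi>. \<xi> \<subseteq> arcs G \<and> card \<xi> = r \<and> primary_for G \<xi> t}"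

end

theory Submission
  imports Defs
begin

text \<open>Every arc into t is itself a path ending at t, so a set \<xi> of arcs into t is cut from t
  only by supersets of \<xi>. Hence \<xi> is the unique minimum cut separating t from \<xi>, so it is
  primary for t, and every r-subset of In(t) belongs to the family A_t(r).\<close>

lemma edge_cut_in_arcs_iff:
  assumes "\<xi> \<subseteq> in_arcs_of G t"
  shows "edge_cut G \<xi> t A \<longleftrightarrow> A \<subseteq> arcs G \<and> \<xi> \<subseteq> A"
proof
  assume cut: "edge_cut G \<xi> t A"
  have "e \<in> A" if "e \<in> \<xi>" for e
  proof -
    have "dpath G [e]" "head G e = t"
      using that assms by (auto simp: in_arcs_of_def dpath_def)
    with cut \<open>e \<in> \<xi>\<close> show "e \<in> A" unfolding edge_cut_def by fastforce
  qed
  with cut show "A \<subseteq> arcs G \<and> \<xi> \<subseteq> A" by (auto simp: edge_cut_def)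
next
  assume "A \<subseteq> arcs G \<and> \<xi> \<subseteq> A"
  then show "edge_cut G \<xi> t A" unfolding edge_cut_def dpath_def
    by (metis disjoint_iff hd_in_set subsetD)
qed

lemma mincut_in_arcs:
  assumes fin: "finite (arcs G)" and sub: "\<xi> \<subseteq> in_arcs_of G t"
  shows "mincut G \<xi> t = card \<xi>"
proof -
  let ?S = "{card A | A. A \<subseteq> arcs G \<and> \<xi> \<subseteq> A}"
  have "\<xi> \<subseteq> arcs G" using sub by (auto simp: in_arcs_of_def)
  then have "card \<xi> \<in> ?S" by blast
  moreover have "card \<xi> \<le> n" if "n \<in> ?S" for n
    using that fin by (auto intro: card_mono finite_subset)
  moreover have "finite ?S" using fin by simp
  ultimately have "Min ?S = card \<xi>" by (intro Min_eqI)
  then show ?thesis unfolding mincut_def edge_cut_in_arcs_iff[OF sub] .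
qed

lemma min_edge_cut_in_arcs_iff:
  assumes fin: "finite (arcs G)" and sub: "\<xi> \<subseteq> in_arcs_of G t"
  shows "min_edge_cut G \<xi> t B \<longleftrightarrow> B = \<xi>"
proof -
  have "\<xi> \<subseteq> arcs G" using sub by (auto simp: in_arcs_of_def)
  moreover have "B = \<xi>" if "B \<subseteq> arcs G" "\<xi> \<subseteq> B" "card B = card \<xi>"
    using that fin by (metis card_subset_eq finite_subset)
  ultimately show ?thesis
    unfolding min_edge_cut_def mincut_in_arcs[OF assms] edge_cut_in_arcs_iff[OF sub] by blast
qed

lemma primary_for_in_arcs:
  assumes fin: "finite (arcs G)" and sub: "\<xi> \<subseteq> in_arcs_of G t"
  shows "primary_for G \<xi> t"
proof -
  have "\<xi> \<subseteq> arcs G" using sub by (auto simp: in_arcs_of_def)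
  then show ?thesis
    unfolding primary_for_def primary_cut_def min_edge_cut_in_arcs_iff[OF assms]
    using edge_cut_in_arcs_iff[OF sub] by blast
qed

lemma card_primary_sets_ge_binomial:
  assumes fin: "finite (arcs G)"
  shows "card (in_arcs_of G t) choose r \<le> card (primary_sets G t r)"
proof -
  have fin_in: "finite (in_arcs_of G t)" using fin by (simp add: in_arcs_of_def)
  have "{B. B \<subseteq> in_arcs_of G t \<and> card B = r} \<subseteq> primary_sets G t r"
    using primary_for_in_arcs[OF fin] unfolding primary_sets_def in_arcs_of_def by auto
  moreover have "finite (primary_sets G t r)" using fin unfolding primary_sets_def by simp
  ultimately have "card {B. B \<subseteq> in_arcs_of G t \<and> card B = r} \<le> card (primary_sets G t r)"
    by (rule card_mono[rotated])
  then show ?thesis using n_subsets[OF fin_in] by simp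
qed

theorem corollary17:
  fixes G :: "('v,'e) pre_digraph" and s t :: 'v and T :: "'v set" and \<omega> :: nat
  assumes "network G s T"
    and "t \<in> T"
    and "\<omega> \<ge> 1"
    and "Cmin G s t \<ge> \<omega>"
  shows "card (primary_sets G t (Cmin G s t - \<omega>))
           \<ge> card (in_arcs_of G t) choose (Cmin G s t - \<omega>)"
proof -
  \<comment> \<open>The bound holds for every size r; of the hypotheses only the finiteness of G is needed.\<close>
  have "finite (arcs G)"
    using assms(1) fin_digraph.finite_arcs unfolding network_def by blast
  then show ?thesis by (rule card_primary_sets_ge_binomial)
qed

end
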